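(* Let $S$ be any set of $\omega$-sharing groups and let $\{x_1/t_1\}\cup\theta$ be an idempotent substitution, where $\theta$ is an idempotent substitution with $x_1\notin\mathrm{dom}(\theta)$. Then \[ \mathrm{mgu_p}(S,\{x_1/t_1\}\cup\theta)=\mathrm{mgu_p}\bigl(\mathrm{mgu_p}(S,\{x_1/t_1\}),\theta\bigr). \]
   Context: Fix a first-order signature and a denumerable set of variables $\mathcal V$. For a term $t$ and variable $v$, $\mathit{occ}(v,t)$ is the number of occurrences of $v$ in $t$. An $\omega$-sharing group is a multiset of variables with finite support, i.e. a function $B:\mathcal V\to\mathbb N$ that is nonzero on only finitely many variables; $\{\!\!\{\}\!\!\}$ is the empty multiset, and the sum of multisets is $(A\uplus B)(v)=A(v)+B(v)$. The multiplicity of an $\omega$-sharing group $B$ in a term $t$ is $\chi(B,t)=\sum_{v} B(v)\cdot\mathit{occ}(v,t)$. A multigraph $G=\langle N_G,E_G,\mathrm{src}_G,\mathrm{tgt}_G\rangle$ consists of a nonempty set of nodes $N_G$, a set of edges $E_G$, and functions $\mathrm{src}_G,\mathrm{tgt}_G:E_G\to N_G$ (multiple distinct edges, including self-loops, may join the same nodes). The out-degree (in-degree) of $n$ is the number of edges $e$ with $\mathrm{src}_G(e)=n$ (resp. $\mathrm{tgt}_G(e)=n$). A path between $n_1$ and $n_k$ is a nonempty sequence of nodes $n_1\dots n_k$ such that consecutive nodes are joined by an edge in either direction; $G$ is connected if every pair of nodes is joined by a path. A (parallel) sharing graph for a set $S$ of $\omega$-sharing groups and an idempotent substitution $\theta=\{x_1/t_1,\dots,x_p/t_p\}$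 (with $p\ge 0$) is a family $\mathcal G=\{G^i\}_{i\in[1,p]}$ of multigraphs over a common node set $N_{\mathcal G}$, with a labeling $l_{\mathcal G}:N_{\mathcal G}\to S$, such that: (i) for every node $n$ and every $i$, the out-degree of $n$ in $G^i$ equals $\chi(l_{\mathcal G}(n),x_i)$ and the in-degree of $n$ in $G^i$ equals $\chi(l_{\mathcal G}(n),t_i)$; (ii) the edge sets $E_{G^i}$ are pairwise disjoint; (iii) the flattening of $\mathcal G$, i.e. the multigraph with nodes $N_{\mathcal G}$, edges $\bigcup_i E_{G^i}$ and source/target inherited from the layers, is connected. The resultant $\omega$-sharing group is $\mathit{res}(\mathcal G)=\biguplus_{n\in N_{\mathcal G}} l_{\mathcal G}(n)$. The parallel abstract unification is $\mathrm{mgu_p}(S,\theta)=\{\mathit{res}(\mathcal G)\mid \mathcal G \text{ a sharing graph for } S \text{ and } \theta\}$. (When $\theta=\epsilon$ is empty, $p=0$ and $\mathrm{mgu_p}(S,\epsilon)=S$.) *)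

theory Defs
  imports Main "HOL-Library.Multiset"
begin

datatype ('f, 'v) trm = Var 'v | Fn 'f "('f, 'v) trm list"

fun occ :: "'v \<Rightarrow> ('f, 'v) trm \<Rightarrow> nat" where
  "occ v (Var w) = (if v = w then 1 else 0)"
| "occ v (Fn f ts) = sum_list (map (occ v) ts)"

definition sdom :: "('v \<Rightarrow> ('f, 'v) trm) \<Rightarrow> 'v set" where
  "sdom \<sigma> = {x. \<sigma> x \<noteq> Var x}"

fun subst_apply :: "('v \<Rightarrow> ('f, 'v) trm) \<Rightarrow> ('f, 'v) trm \<Rightarrow> ('f, 'v) trm" where
  "subst_apply \<sigma> (Var x) = \<sigma> x"
| "subst_apply \<sigma> (Fn f ts) = Fn f (map (subst_apply \<sigma>) ts)"

definition is_subst :: "('v \<Rightarrow> ('f, 'v) trm) \<Rightarrow> bool" where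
  "is_subst \<sigma> \<longleftrightarrow> finite (sdom \<sigma>)"

definition idempotent :: "('v \<Rightarrow> ('f, 'v) trm) \<Rightarrow> bool" where
  "idempotent \<sigma> \<longleftrightarrow> is_subst \<sigma> \<and> (\<forall>t. subst_apply \<sigma> (subst_apply \<sigma> t) = subst_apply \<sigma> t)"

text \<open>omega-sharing groups are finite multisets of variables; multiplicity in a term.\<close>
definition chi :: "'v multiset \<Rightarrow> ('f, 'v) trm \<Rightarrow> nat" where
  "chi B t = (\<Sum>v\<in>set_mset B. count B v * occ v t)"

text \<open>A (parallel) sharing graph for S and \<sigma>: a finite nonempty node set N, for each
  binding variable x \<in> sdom \<sigma> a layer multigraph with edge set E x and source/target
  maps src x, tgt x, and a labelling lab of nodes by elements of S.\<close>
definition sharing_graph ::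
  "'v multiset set \<Rightarrow> ('v \<Rightarrow> ('f, 'v) trm) \<Rightarrow> nat set \<Rightarrow> ('v \<Rightarrow> nat set)
   \<Rightarrow> ('v \<Rightarrow> nat \<Rightarrow> nat) \<Rightarrow> ('v \<Rightarrow> nat \<Rightarrow> nat) \<Rightarrow> (nat \<Rightarrow> 'v multiset) \<Rightarrow> bool" where
  "sharing_graph S \<sigma> N E src tgt lab \<longleftrightarrow>
     finite N \<and> N \<noteq> {} \<and>
     (\<forall>n\<in>N. lab n \<in> S) \<and>
     (\<forall>x\<in>sdom \<sigma>. finite (E x) \<and> (\<forall>e\<in>E x. src x e \<in> N \<and> tgt x e \<in> N)) \<and>
     (\<forall>n\<in>N. \<forall>x\<in>sdom \<sigma>.
        card {e\<in>E x. src x e = n} = chi (lab n) (Var x :: ('f, 'v) trm) \<and>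
        card {e\<in>E x. tgt x e = n} = chi (lab n) (\<sigma> x)) \<and>
     (\<forall>x\<in>sdom \<sigma>. \<forall>y\<in>sdom \<sigma>. x \<noteq> y \<longrightarrow> E x \<inter> E y = {}) \<and>
     (let R = {(src x e, tgt x e) | x e. x \<in> sdom \<sigma> \<and> e \<in> E x}
      in \<forall>n\<in>N. \<forall>m\<in>N. (n, m) \<in> (R \<union> R\<inverse>)\<^sup>*)"

definition mgu_p :: "'v multiset set \<Rightarrow> ('v \<Rightarrow> ('f, 'v) trm) \<Rightarrow> 'v multiset set" where
  "mgu_p S \<sigma> = {(\<Sum>n\<in>N. lab n) | N E src tgt lab. sharing_graph S \<sigma> N E src tgt lab}"

end

theory Submission
  imports Defs "HOL-Library.Nat_Bijection"
begin

text \<open>Let \<open>\<sigma>\<close> be the union of substitutions \<open>\<sigma>1\<close> and \<open>\<theta>\<close> with disjoint domains.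
  In a sharing graph for \<open>\<sigma>\<close>, every connected component of the \<open>\<sigma>1\<close>-layers is itself a
  sharing graph for \<open>\<sigma>1\<close>; collapsing each component to one node labelled by the sum of its
  labels leaves a sharing graph for \<open>\<theta>\<close> over \<open>mgu_p S \<sigma>1\<close>, because \<open>chi\<close> is additive.
  Conversely, replace each node of a sharing graph for \<open>\<theta>\<close> over \<open>mgu_p S \<sigma>1\<close> by a
  witnessing sharing graph for \<open>\<sigma>1\<close>; by additivity of \<open>chi\<close> the \<open>\<theta>\<close>-edges at a node can be
  distributed over the nodes of its witness so that all degrees are right, and connectivity is
  inherited from the outer graph and the witnesses.\<close>

lemma chi_empty [simp]: "chi {#} t = 0"
  by (simp add: chi_def)

lemma chi_add: "chi (A + B) t = chi A t + chi B t"
proof -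
  have chi_on: "chi M t = (\<Sum>v\<in>set_mset A \<union> set_mset B. count M v * occ v t)"
    if "set_mset M \<subseteq> set_mset A \<union> set_mset B" for M
    unfolding chi_def by (rule sum.mono_neutral_left) (use that in \<open>auto simp: not_in_iff\<close>)
  show ?thesis
    by (simp add: chi_on sum.distrib algebra_simps)
qed

lemma chi_sum: "chi (\<Sum>a\<in>A. f a) t = (\<Sum>a\<in>A. chi (f a) t)"
  by (induction A rule: infinite_finite_induct) (auto simp: chi_add)

lemma card_image_Collect:
  assumes "inj_on f A"
  shows "card {e \<in> f ` A. P e} = card {a \<in> A. P (f a)}"
proof -
  have "{e \<in> f ` A. P e} = f ` {a \<in> A. P (f a)}" by auto
  moreover have "inj_on f {a \<in> A. P (f a)}" using assms by (rule inj_on_subset) auto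
  ultimately show ?thesis by (simp add: card_image)
qed

lemma card_Collect_mem_eq_sum_fibres:
  assumes "finite E" "finite A"
  shows "card {e\<in>E. g e \<in> A} = (\<Sum>n\<in>A. card {e\<in>E. g e = n})"
proof -
  have "{e\<in>E. g e \<in> A} = (\<Union>n\<in>A. {e\<in>E. g e = n})" by auto
  also have "card \<dots> = (\<Sum>n\<in>A. card {e\<in>E. g e = n})"
    by (rule card_UN_disjoint) (use assms in auto)
  finally show ?thesis .
qed

lemma exists_map_with_fibre_cards:
  assumes "finite B" "finite A" "card A = (\<Sum>b\<in>B. w b)"
  shows "\<exists>h. h ` A \<subseteq> B \<and> (\<forall>b\<in>B. card {a\<in>A. h a = b} = w b)"
  using assms
proof (induction B arbitrary: A rule: finite_induct)
  case empty
  then show ?case by auto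
next
  case (insert b B)
  then have "w b \<le> card A" by simp
  then obtain A0 where A0: "A0 \<subseteq> A" "card A0 = w b"
    by (rule obtain_subset_with_card_n)
  have "card (A - A0) = (\<Sum>b\<in>B. w b)"
    using insert A0 by (simp add: card_Diff_subset finite_subset)
  moreover have "finite (A - A0)" using insert.prems(1) by simp
  ultimately obtain h where h: "h ` (A - A0) \<subseteq> B" "\<forall>c\<in>B. card {a\<in>A - A0. h a = c} = w c"
    using insert.IH by blast
  define h' where "h' a = (if a \<in> A0 then b else h a)" for a
  have "{a\<in>A. h' a = b} = A0" using h A0 insert.hyps(2) by (auto simp: h'_def)
  moreover have "{a\<in>A. h' a = c} = {a\<in>A - A0. h a = c}" if "c \<in> B" for c
    using that insert.hyps(2) by (auto simp: h'_def)
  ultimately show ?case using h A0 by (intro exI[of _ h']) (auto simp: h'_def)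
qed

lemma exists_map_into_blocks_with_fibre_cards:
  assumes "finite A" "g ` A \<subseteq> I"
    and "\<And>i. i \<in> I \<Longrightarrow> finite (B i)"
    and "\<And>i. i \<in> I \<Longrightarrow> card {a\<in>A. g a = i} = (\<Sum>b\<in>B i. w b)"
  shows "\<exists>h. (\<forall>a\<in>A. h a \<in> B (g a)) \<and>
    (\<forall>i\<in>I. \<forall>b\<in>B i. card {a\<in>A. g a = i \<and> h a = b} = w b)"
proof -
  have "\<forall>i\<in>I. \<exists>h. h ` {a\<in>A. g a = i} \<subseteq> B i \<and> (\<forall>b\<in>B i. card {a\<in>{a\<in>A. g a = i}. h a = b} = w b)"
    using assms by (intro ballI exists_map_with_fibre_cards) auto
  then obtain H where H: "\<forall>i\<in>I. H i ` {a\<in>A. g a = i} \<subseteq> B i \<and>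
      (\<forall>b\<in>B i. card {a\<in>{a\<in>A. g a = i}. H i a = b} = w b)"
    by (rule bchoice[THEN exE])
  have "H (g a) a \<in> B (g a)" if "a \<in> A" for a
    using H assms(2) that by blast
  moreover have "{a\<in>A. g a = i \<and> H (g a) a = b} = {a\<in>{a\<in>A. g a = i}. H i a = b}" for i b
    by auto
  ultimately show ?thesis
    using H by (intro exI[of _ "\<lambda>a. H (g a) a"]) auto
qed

section \<open>Undirected reachability\<close>

lemma rtrancl_Un_converse_sym: "(a, b) \<in> (R \<union> R\<inverse>)\<^sup>* \<Longrightarrow> (b, a) \<in> (R \<union> R\<inverse>)\<^sup>*"
  using sym_rtrancl[OF sym_Un_converse] by (rule symD)

lemma rtrancl_Un_converse_map:
  assumes "(a, b) \<in> (R \<union> R\<inverse>)\<^sup>*"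
    and "\<And>u v. (u, v) \<in> R \<Longrightarrow> (f u, f v) \<in> (R' \<union> R'\<inverse>)\<^sup>*"
  shows "(f a, f b) \<in> (R' \<union> R'\<inverse>)\<^sup>*"
  using assms(1)
proof (induction rule: rtrancl_induct)
  case (step v w)
  from step.hyps(2) have "(f v, f w) \<in> (R' \<union> R'\<inverse>)\<^sup>*"
  proof
    assume "(v, w) \<in> R\<inverse>"
    then show ?thesis using rtrancl_Un_converse_sym[OF assms(2)] by simp
  qed (rule assms(2))
  with step.IH show ?case by (rule rtrancl_trans)
qed simp

lemma rtrancl_Un_converse_closed_subset:
  assumes "(a, b) \<in> (R \<union> R\<inverse>)\<^sup>*" "a \<in> C"
    and "\<And>u v. (u, v) \<in> R \<Longrightarrow> u \<in> C \<longleftrightarrow> v \<in> C"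
  shows "b \<in> C \<and> (a, b) \<in> (R \<inter> C \<times> C \<union> (R \<inter> C \<times> C)\<inverse>)\<^sup>*"
  using assms(1)
proof (induction rule: rtrancl_induct)
  case (step v w)
  then have "w \<in> C" and "(v, w) \<in> R \<inter> C \<times> C \<union> (R \<inter> C \<times> C)\<inverse>"
    using assms(3) by blast+
  then show ?case using step.IH by (meson rtrancl.rtrancl_into_rtrancl)
qed (use assms(2) in simp)

lemma rtrancl_Un_converse_blocks:
  assumes "(i, j) \<in> (R' \<union> R'\<inverse>)\<^sup>*" "i \<in> I"
    and "\<And>u v. (u, v) \<in> R' \<Longrightarrow> u \<in> I \<and> v \<in> I"
    and "\<And>k a b. k \<in> I \<Longrightarrow> a \<in> B k \<Longrightarrow> b \<in> B k \<Longrightarrow> (a, b) \<in> (R \<union> R\<inverse>)\<^sup>*"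
    and "\<And>u v. (u, v) \<in> R' \<Longrightarrow> \<exists>a\<in>B u. \<exists>b\<in>B v. (a, b) \<in> R"
  shows "\<forall>a\<in>B i. \<forall>b\<in>B j. (a, b) \<in> (R \<union> R\<inverse>)\<^sup>*"
  using assms(1)
proof (induction rule: rtrancl_induct)
  case base
  then show ?case using assms(2,4) by blast
next
  case (step j k)
  then obtain c d where cd: "c \<in> B j" "d \<in> B k" "(c, d) \<in> R \<union> R\<inverse>"
    using assms(5) by blast
  have "k \<in> I" using step.hyps(2) assms(3) by blast
  show ?case
  proof (intro ballI)
    fix a b assume "a \<in> B i" "b \<in> B k"
    have "(a, c) \<in> (R \<union> R\<inverse>)\<^sup>*" using step.IH \<open>a \<in> B i\<close> cd(1) by blast
    also have "(c, d) \<in> (R \<union> R\<inverse>)\<^sup>*" using cd(3) by blast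
    also have "(d, b) \<in> (R \<union> R\<inverse>)\<^sup>*" using assms(4) \<open>k \<in> I\<close> cd(2) \<open>b \<in> B k\<close> by blast
    finally show "(a, b) \<in> (R \<union> R\<inverse>)\<^sup>*" .
  qed
qed

lemma equiv_representative:
  assumes "equiv A r"
  obtains rep :: "'a \<Rightarrow> 'a" where "\<And>a b. a \<in> A \<Longrightarrow> b \<in> A \<Longrightarrow> rep a = rep b \<longleftrightarrow> (a, b) \<in> r"
proof -
  define rep where "rep a = (SOME b. b \<in> r `` {a})" for a
  have rep_mem: "(a, rep a) \<in> r" if "a \<in> A" for a
    using someI[of "\<lambda>b. b \<in> r `` {a}" a] assms that by (simp add: rep_def equiv_def refl_on_def)
  show ?thesis
  proof (rule that[of rep])
    fix a b assume "a \<in> A" "b \<in> A"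
    show "rep a = rep b \<longleftrightarrow> (a, b) \<in> r"
    proof
      assume "rep a = rep b"
      then show "(a, b) \<in> r"
        using rep_mem[OF \<open>a \<in> A\<close>] rep_mem[OF \<open>b \<in> A\<close>] assms by (metis equiv_def symD transD)
    next
      assume "(a, b) \<in> r"
      with assms have "r `` {a} = r `` {b}" by (rule equiv_class_eq)
      then show "rep a = rep b" by (simp only: rep_def)
    qed
  qed
qed

definition edge_rel ::
  "'v set \<Rightarrow> ('v \<Rightarrow> nat set) \<Rightarrow> ('v \<Rightarrow> nat \<Rightarrow> nat) \<Rightarrow> ('v \<Rightarrow> nat \<Rightarrow> nat) \<Rightarrow> (nat \<times> nat) set" where
  "edge_rel D E src tgt = {(src x e, tgt x e) | x e. x \<in> D \<and> e \<in> E x}"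

lemma sharing_graph_iff:
  fixes \<sigma> :: "'v \<Rightarrow> ('f, 'v) trm"
  shows "sharing_graph S \<sigma> N E src tgt lab \<longleftrightarrow>
     finite N \<and> N \<noteq> {} \<and>
     (\<forall>n\<in>N. lab n \<in> S) \<and>
     (\<forall>x\<in>sdom \<sigma>. finite (E x) \<and> (\<forall>e\<in>E x. src x e \<in> N \<and> tgt x e \<in> N)) \<and>
     (\<forall>n\<in>N. \<forall>x\<in>sdom \<sigma>.
        card {e\<in>E x. src x e = n} = chi (lab n) (Var x :: ('f, 'v) trm) \<and>
        card {e\<in>E x. tgt x e = n} = chi (lab n) (\<sigma> x)) \<and>
     (\<forall>x\<in>sdom \<sigma>. \<forall>y\<in>sdom \<sigma>. x \<noteq> y \<longrightarrow> E x \<inter> E y = {}) \<and>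
     (\<forall>n\<in>N. \<forall>m\<in>N. (n, m) \<in> (edge_rel (sdom \<sigma>) E src tgt \<union> (edge_rel (sdom \<sigma>) E src tgt)\<inverse>)\<^sup>*)"
  unfolding sharing_graph_def edge_rel_def Let_def ..

lemma sharing_graphI [case_names finite_nodes nodes_nonempty labels edges_finite src_mem tgt_mem
    out_degree in_degree edges_disjoint connected]:
  fixes \<sigma> :: "'v \<Rightarrow> ('f, 'v) trm"
  assumes "finite N" "N \<noteq> {}" "\<And>n. n \<in> N \<Longrightarrow> lab n \<in> S"
    "\<And>x. x \<in> sdom \<sigma> \<Longrightarrow> finite (E x)"
    "\<And>x e. x \<in> sdom \<sigma> \<Longrightarrow> e \<in> E x \<Longrightarrow> src x e \<in> N"
    "\<And>x e. x \<in> sdom \<sigma> \<Longrightarrow> e \<in> E x \<Longrightarrow> tgt x e \<in> N"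
    "\<And>n x. n \<in> N \<Longrightarrow> x \<in> sdom \<sigma> \<Longrightarrow> card {e\<in>E x. src x e = n} = chi (lab n) (Var x :: ('f, 'v) trm)"
    "\<And>n x. n \<in> N \<Longrightarrow> x \<in> sdom \<sigma> \<Longrightarrow> card {e\<in>E x. tgt x e = n} = chi (lab n) (\<sigma> x)"
    "\<And>x y. x \<in> sdom \<sigma> \<Longrightarrow> y \<in> sdom \<sigma> \<Longrightarrow> x \<noteq> y \<Longrightarrow> E x \<inter> E y = {}"
    "\<And>n m. n \<in> N \<Longrightarrow> m \<in> N \<Longrightarrow>
      (n, m) \<in> (edge_rel (sdom \<sigma>) E src tgt \<union> (edge_rel (sdom \<sigma>) E src tgt)\<inverse>)\<^sup>*"
  shows "sharing_graph S \<sigma> N E src tgt lab"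
  unfolding sharing_graph_iff by (intro conjI ballI impI) (simp_all add: assms)

lemma
  fixes \<sigma> :: "'v \<Rightarrow> ('f, 'v) trm"
  assumes "sharing_graph S \<sigma> N E src tgt lab"
  shows sharing_graph_finite_nodes: "finite N"
    and sharing_graph_nodes_nonempty: "N \<noteq> {}"
    and sharing_graph_labels: "\<And>n. n \<in> N \<Longrightarrow> lab n \<in> S"
    and sharing_graph_edges_finite: "\<And>x. x \<in> sdom \<sigma> \<Longrightarrow> finite (E x)"
    and sharing_graph_src_mem: "\<And>x e. x \<in> sdom \<sigma> \<Longrightarrow> e \<in> E x \<Longrightarrow> src x e \<in> N"
    and sharing_graph_tgt_mem: "\<And>x e. x \<in> sdom \<sigma> \<Longrightarrow> e \<in> E x \<Longrightarrow> tgt x e \<in> N"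
    and sharing_graph_out_degree: "\<And>n x. n \<in> N \<Longrightarrow> x \<in> sdom \<sigma> \<Longrightarrow>
      card {e\<in>E x. src x e = n} = chi (lab n) (Var x :: ('f, 'v) trm)"
    and sharing_graph_in_degree: "\<And>n x. n \<in> N \<Longrightarrow> x \<in> sdom \<sigma> \<Longrightarrow>
      card {e\<in>E x. tgt x e = n} = chi (lab n) (\<sigma> x)"
    and sharing_graph_edges_disjoint: "\<And>x y. x \<in> sdom \<sigma> \<Longrightarrow> y \<in> sdom \<sigma> \<Longrightarrow> x \<noteq> y \<Longrightarrow> E x \<inter> E y = {}"
    and sharing_graph_connected: "\<And>n m. n \<in> N \<Longrightarrow> m \<in> N \<Longrightarrow>
      (n, m) \<in> (edge_rel (sdom \<sigma>) E src tgt \<union> (edge_rel (sdom \<sigma>) E src tgt)\<inverse>)\<^sup>*"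
  using assms unfolding sharing_graph_iff by blast+

lemma mem_mgu_p_iff:
  "M \<in> mgu_p S \<sigma> \<longleftrightarrow> (\<exists>N E src tgt lab. M = (\<Sum>n\<in>N. lab n) \<and> sharing_graph S \<sigma> N E src tgt lab)"
  by (auto simp: mgu_p_def)

section \<open>Collapsing the components of some layers\<close>

lemma sharing_graph_restrict:
  fixes \<sigma> \<sigma>1 :: "'v \<Rightarrow> ('f, 'v) trm"
  assumes G: "sharing_graph S \<sigma> N E src tgt lab"
    and dom: "sdom \<sigma>1 \<subseteq> sdom \<sigma>" "\<And>x. x \<in> sdom \<sigma>1 \<Longrightarrow> \<sigma>1 x = \<sigma> x"
    and C: "C \<subseteq> N" "C \<noteq> {}"
    and closed: "\<And>x e. x \<in> sdom \<sigma>1 \<Longrightarrow> e \<in> E x \<Longrightarrow> src x e \<in> C \<longleftrightarrow> tgt x e \<in> C"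
    and connected: "\<And>n m. n \<in> C \<Longrightarrow> m \<in> C \<Longrightarrow>
      (n, m) \<in> (edge_rel (sdom \<sigma>1) E src tgt \<union> (edge_rel (sdom \<sigma>1) E src tgt)\<inverse>)\<^sup>*"
  shows "sharing_graph S \<sigma>1 C (\<lambda>x. {e \<in> E x. src x e \<in> C}) src tgt lab"
proof (rule sharing_graphI)
  show "finite C" using C(1) sharing_graph_finite_nodes[OF G] by (rule finite_subset)
next
  fix n x assume "n \<in> C" "x \<in> sdom \<sigma>1"
  then have "{e \<in> {e \<in> E x. src x e \<in> C}. src x e = n} = {e \<in> E x. src x e = n}"
    by auto
  moreover have "n \<in> N" "x \<in> sdom \<sigma>" using C(1) dom(1) \<open>n \<in> C\<close> \<open>x \<in> sdom \<sigma>1\<close> by auto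
  ultimately show "card {e \<in> {e \<in> E x. src x e \<in> C}. src x e = n} = chi (lab n) (Var x :: ('f, 'v) trm)"
    using sharing_graph_out_degree[OF G] by simp
next
  fix n x assume "n \<in> C" "x \<in> sdom \<sigma>1"
  then have "{e \<in> {e \<in> E x. src x e \<in> C}. tgt x e = n} = {e \<in> E x. tgt x e = n}"
    using closed by auto
  moreover have "n \<in> N" "x \<in> sdom \<sigma>" using C(1) dom(1) \<open>n \<in> C\<close> \<open>x \<in> sdom \<sigma>1\<close> by auto
  ultimately show "card {e \<in> {e \<in> E x. src x e \<in> C}. tgt x e = n} = chi (lab n) (\<sigma>1 x)"
    using sharing_graph_in_degree[OF G] dom(2) \<open>x \<in> sdom \<sigma>1\<close> by simp
next
  fix n m assume "n \<in> C" "m \<in> C"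
  let ?R = "edge_rel (sdom \<sigma>1) E src tgt"
  let ?R\<^sub>C = "edge_rel (sdom \<sigma>1) (\<lambda>x. {e \<in> E x. src x e \<in> C}) src tgt"
  have "(n, m) \<in> (?R \<inter> C \<times> C \<union> (?R \<inter> C \<times> C)\<inverse>)\<^sup>*"
    using rtrancl_Un_converse_closed_subset[OF connected[OF \<open>n \<in> C\<close> \<open>m \<in> C\<close>] \<open>n \<in> C\<close>] closed
    by (auto simp: edge_rel_def)
  moreover have "?R \<inter> C \<times> C \<subseteq> ?R\<^sub>C" by (auto simp: edge_rel_def)
  ultimately show "(n, m) \<in> (?R\<^sub>C \<union> ?R\<^sub>C\<inverse>)\<^sup>*"
    by (meson Un_mono converse_mono rtrancl_mono subsetD)
qed (use G C dom closed in \<open>auto dest: sharing_graph_labels sharing_graph_edges_finite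
      sharing_graph_edges_disjoint\<close>)

lemma sharing_graph_quotient:
  fixes \<sigma> \<theta> :: "'v \<Rightarrow> ('f, 'v) trm"
  assumes G: "sharing_graph S \<sigma> N E src tgt lab"
    and dom: "sdom \<sigma> = D \<union> sdom \<theta>" "\<And>y. y \<in> sdom \<theta> \<Longrightarrow> \<theta> y = \<sigma> y"
    and collapse: "\<And>x e. x \<in> D \<Longrightarrow> e \<in> E x \<Longrightarrow> q (src x e) = q (tgt x e)"
    and labels: "\<And>m. m \<in> q ` N \<Longrightarrow> (\<Sum>n\<in>{n\<in>N. q n = m}. lab n) \<in> S'"
  shows "sharing_graph S' \<theta> (q ` N) E (\<lambda>x e. q (src x e)) (\<lambda>x e. q (tgt x e))
    (\<lambda>m. \<Sum>n\<in>{n\<in>N. q n = m}. lab n)"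
proof (rule sharing_graphI)
  fix m y assume "m \<in> q ` N" "y \<in> sdom \<theta>"
  then have y: "y \<in> sdom \<sigma>" using dom(1) by simp
  have "{e\<in>E y. q (src y e) = m} = {e\<in>E y. src y e \<in> {n\<in>N. q n = m}}"
    using sharing_graph_src_mem[OF G y] by auto
  also have "card \<dots> = (\<Sum>n\<in>{n\<in>N. q n = m}. card {e\<in>E y. src y e = n})"
    using G y by (intro card_Collect_mem_eq_sum_fibres) (auto dest: sharing_graph_edges_finite
        sharing_graph_finite_nodes)
  also have "\<dots> = chi (\<Sum>n\<in>{n\<in>N. q n = m}. lab n) (Var y :: ('f, 'v) trm)"
    using sharing_graph_out_degree[OF G _ y] by (simp add: chi_sum)
  finally show "card {e\<in>E y. q (src y e) = m} = chi (\<Sum>n\<in>{n\<in>N. q n = m}. lab n) (Var y :: ('f, 'v) trm)" .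
next
  fix m y assume "m \<in> q ` N" "y \<in> sdom \<theta>"
  then have y: "y \<in> sdom \<sigma>" using dom(1) by simp
  have "{e\<in>E y. q (tgt y e) = m} = {e\<in>E y. tgt y e \<in> {n\<in>N. q n = m}}"
    using sharing_graph_tgt_mem[OF G y] by auto
  also have "card \<dots> = (\<Sum>n\<in>{n\<in>N. q n = m}. card {e\<in>E y. tgt y e = n})"
    using G y by (intro card_Collect_mem_eq_sum_fibres) (auto dest: sharing_graph_edges_finite
        sharing_graph_finite_nodes)
  also have "\<dots> = chi (\<Sum>n\<in>{n\<in>N. q n = m}. lab n) (\<theta> y)"
    using sharing_graph_in_degree[OF G _ y] dom(2) \<open>y \<in> sdom \<theta>\<close> by (simp add: chi_sum)
  finally show "card {e\<in>E y. q (tgt y e) = m} = chi (\<Sum>n\<in>{n\<in>N. q n = m}. lab n) (\<theta> y)" .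
next
  fix m m' assume "m \<in> q ` N" "m' \<in> q ` N"
  then obtain a b where ab: "a \<in> N" "b \<in> N" "m = q a" "m' = q b" by blast
  let ?R = "edge_rel (sdom \<theta>) E (\<lambda>x e. q (src x e)) (\<lambda>x e. q (tgt x e))"
  have "(q a, q b) \<in> (?R \<union> ?R\<inverse>)\<^sup>*"
  proof (rule rtrancl_Un_converse_map[OF sharing_graph_connected[OF G ab(1,2)]])
    fix u v assume "(u, v) \<in> edge_rel (sdom \<sigma>) E src tgt"
    then obtain x e where "x \<in> D \<union> sdom \<theta>" "e \<in> E x" "u = src x e" "v = tgt x e"
      using dom(1) by (auto simp: edge_rel_def)
    then have "q u = q v \<or> (q u, q v) \<in> ?R"
      using collapse by (auto simp: edge_rel_def)
    then show "(q u, q v) \<in> (?R \<union> ?R\<inverse>)\<^sup>*" by auto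
  qed
  then show "(m, m') \<in> (?R \<union> ?R\<inverse>)\<^sup>*" using ab by simp
qed (use G dom labels in \<open>auto dest: sharing_graph_edges_finite sharing_graph_edges_disjoint
      sharing_graph_src_mem sharing_graph_tgt_mem sharing_graph_finite_nodes
      sharing_graph_nodes_nonempty\<close>)

lemma sharing_graph_collapse:
  fixes \<sigma> \<sigma>1 \<theta> :: "'v \<Rightarrow> ('f, 'v) trm"
  assumes G: "sharing_graph S \<sigma> N E src tgt lab"
    and dom: "sdom \<sigma> = sdom \<sigma>1 \<union> sdom \<theta>"
      "\<And>x. x \<in> sdom \<sigma>1 \<Longrightarrow> \<sigma>1 x = \<sigma> x" "\<And>y. y \<in> sdom \<theta> \<Longrightarrow> \<theta> y = \<sigma> y"
  shows "(\<Sum>n\<in>N. lab n) \<in> mgu_p (mgu_p S \<sigma>1) \<theta>"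
proof -
  let ?R = "edge_rel (sdom \<sigma>1) E src tgt"
  define conn where "conn = (?R \<union> ?R\<inverse>)\<^sup>* \<inter> N \<times> N"
  have "equiv N conn"
    unfolding conn_def equiv_def
    by (auto simp: refl_on_def sym_def trans_def intro: rtrancl_Un_converse_sym rtrancl_trans)
  txt \<open>Nodes are natural numbers, so each component is named by a representative node.\<close>
  then obtain rep :: "nat \<Rightarrow> nat" where rep: "\<And>n m. n \<in> N \<Longrightarrow> m \<in> N \<Longrightarrow> rep n = rep m \<longleftrightarrow> (n, m) \<in> conn"
    by (metis equiv_representative)
  have rep_edge: "rep (src x e) = rep (tgt x e)" if "x \<in> sdom \<sigma>1" "e \<in> E x" for x e
  proof -
    have "src x e \<in> N" "tgt x e \<in> N"
      using that dom(1) G by (auto intro: sharing_graph_src_mem sharing_graph_tgt_mem)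
    moreover have "(src x e, tgt x e) \<in> ?R" using that by (auto simp: edge_rel_def)
    ultimately show ?thesis using rep by (auto simp: conn_def)
  qed
  have "(\<Sum>n\<in>{n\<in>N. rep n = c}. lab n) \<in> mgu_p S \<sigma>1" if "c \<in> rep ` N" for c
  proof -
    have "sharing_graph S \<sigma>1 {n\<in>N. rep n = c} (\<lambda>x. {e \<in> E x. src x e \<in> {n\<in>N. rep n = c}}) src tgt lab"
    proof (rule sharing_graph_restrict[OF G])
      fix x e assume "x \<in> sdom \<sigma>1" "e \<in> E x"
      then show "src x e \<in> {n\<in>N. rep n = c} \<longleftrightarrow> tgt x e \<in> {n\<in>N. rep n = c}"
        using rep_edge dom(1) G by (auto intro: sharing_graph_src_mem sharing_graph_tgt_mem)
    next
      fix n m assume "n \<in> {n\<in>N. rep n = c}" "m \<in> {n\<in>N. rep n = c}"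
      then show "(n, m) \<in> (?R \<union> ?R\<inverse>)\<^sup>*" using rep[of n m] by (simp add: conn_def)
    qed (use that dom in auto)
    then show ?thesis unfolding mem_mgu_p_iff by blast
  qed
  then have "sharing_graph (mgu_p S \<sigma>1) \<theta> (rep ` N) E (\<lambda>x e. rep (src x e)) (\<lambda>x e. rep (tgt x e))
      (\<lambda>c. \<Sum>n\<in>{n\<in>N. rep n = c}. lab n)"
    using G dom rep_edge by (intro sharing_graph_quotient) auto
  moreover have "(\<Sum>n\<in>N. lab n) = (\<Sum>c\<in>rep ` N. \<Sum>n\<in>{n\<in>N. rep n = c}. lab n)"
    using sharing_graph_finite_nodes[OF G] by (rule sum.image_gen)
  ultimately show ?thesis unfolding mem_mgu_p_iff by (intro exI conjI)
qed

section \<open>Expanding nodes into sharing graphs\<close>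

definition subst_union :: "('v \<Rightarrow> ('f, 'v) trm) \<Rightarrow> ('v \<Rightarrow> ('f, 'v) trm) \<Rightarrow> 'v \<Rightarrow> ('f, 'v) trm" where
  "subst_union \<sigma>1 \<theta> x = (if x \<in> sdom \<sigma>1 then \<sigma>1 x else \<theta> x)"

lemma sdom_subst_union: "sdom (subst_union \<sigma>1 \<theta>) = sdom \<sigma>1 \<union> sdom \<theta>"
  by (auto simp: sdom_def subst_union_def)

locale sharing_graph_expansion =
  fixes S :: "'v multiset set"
    and \<sigma>1 \<theta> :: "'v \<Rightarrow> ('f, 'v) trm"
    and N' :: "nat set" and E' :: "'v \<Rightarrow> nat set" and src' tgt' :: "'v \<Rightarrow> nat \<Rightarrow> nat"
    and lab' :: "nat \<Rightarrow> 'v multiset"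
    and GN :: "nat \<Rightarrow> nat set" and GE :: "nat \<Rightarrow> 'v \<Rightarrow> nat set"
    and Gs Gt :: "nat \<Rightarrow> 'v \<Rightarrow> nat \<Rightarrow> nat" and Gl :: "nat \<Rightarrow> nat \<Rightarrow> 'v multiset"
    and HS HT :: "'v \<Rightarrow> nat \<Rightarrow> nat"
  assumes disjoint_domains: "sdom \<sigma>1 \<inter> sdom \<theta> = {}"
    and outer: "sharing_graph (mgu_p S \<sigma>1) \<theta> N' E' src' tgt' lab'"
    and inner: "\<And>r. r \<in> N' \<Longrightarrow> sharing_graph S \<sigma>1 (GN r) (GE r) (Gs r) (Gt r) (Gl r)"
    and inner_sum: "\<And>r. r \<in> N' \<Longrightarrow> lab' r = (\<Sum>n\<in>GN r. Gl r n)"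
    and HS_mem: "\<And>y a. y \<in> sdom \<theta> \<Longrightarrow> a \<in> E' y \<Longrightarrow>
      HS y a \<in> (\<lambda>n. prod_encode (src' y a, n)) ` GN (src' y a)"
    and HT_mem: "\<And>y a. y \<in> sdom \<theta> \<Longrightarrow> a \<in> E' y \<Longrightarrow>
      HT y a \<in> (\<lambda>n. prod_encode (tgt' y a, n)) ` GN (tgt' y a)"
    and HS_card: "\<And>y r n. y \<in> sdom \<theta> \<Longrightarrow> r \<in> N' \<Longrightarrow> n \<in> GN r \<Longrightarrow>
      card {a \<in> E' y. HS y a = prod_encode (r, n)} = chi (Gl r n) (Var y :: ('f, 'v) trm)"
    and HT_card: "\<And>y r n. y \<in> sdom \<theta> \<Longrightarrow> r \<in> N' \<Longrightarrow> n \<in> GN r \<Longrightarrow>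
      card {a \<in> E' y. HT y a = prod_encode (r, n)} = chi (Gl r n) (\<theta> y)"
begin

text \<open>Node \<open>prod_encode (r, n)\<close> is node \<open>n\<close> of the witness graph of the outer node \<open>r\<close>.
  Edges of a \<open>\<sigma>1\<close>-layer are even and encode the outer node together with an edge of its
  witness graph; edges of a \<open>\<theta>\<close>-layer are odd and encode an outer edge, whose endpoints are
  reattached inside the witness graphs by \<open>HS\<close> and \<open>HT\<close>. Parity keeps the layers disjoint.\<close>

definition nodes :: "nat set" where
  "nodes = prod_encode ` Sigma N' GN"

definition lab :: "nat \<Rightarrow> 'v multiset" where
  "lab p = case_prod Gl (prod_decode p)"

definition edges :: "'v \<Rightarrow> nat set" where
  "edges x = (if x \<in> sdom \<sigma>1 then (\<lambda>a. 2 * prod_encode a) ` Sigma N' (\<lambda>r. GE r x)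
     else (\<lambda>a. Suc (2 * a)) ` E' x)"

definition src :: "'v \<Rightarrow> nat \<Rightarrow> nat" where
  "src x p = (if x \<in> sdom \<sigma>1 then (case prod_decode (p div 2) of (r, e) \<Rightarrow> prod_encode (r, Gs r x e))
     else HS x (p div 2))"

definition tgt :: "'v \<Rightarrow> nat \<Rightarrow> nat" where
  "tgt x p = (if x \<in> sdom \<sigma>1 then (case prod_decode (p div 2) of (r, e) \<Rightarrow> prod_encode (r, Gt r x e))
     else HT x (p div 2))"

lemma lab_prod_encode [simp]: "lab (prod_encode (r, n)) = Gl r n"
  by (simp add: lab_def)

lemma src_inner [simp]:
  "x \<in> sdom \<sigma>1 \<Longrightarrow> src x (2 * prod_encode a) = prod_encode (fst a, Gs (fst a) x (snd a))"
  by (simp add: src_def case_prod_unfold)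

lemma tgt_inner [simp]:
  "x \<in> sdom \<sigma>1 \<Longrightarrow> tgt x (2 * prod_encode a) = prod_encode (fst a, Gt (fst a) x (snd a))"
  by (simp add: tgt_def case_prod_unfold)

lemma src_outer [simp]: "y \<in> sdom \<theta> \<Longrightarrow> src y (Suc (2 * a)) = HS y a"
  using disjoint_domains by (auto simp: src_def)

lemma tgt_outer [simp]: "y \<in> sdom \<theta> \<Longrightarrow> tgt y (Suc (2 * a)) = HT y a"
  using disjoint_domains by (auto simp: tgt_def)

lemma edges_inner: "x \<in> sdom \<sigma>1 \<Longrightarrow> edges x = (\<lambda>a. 2 * prod_encode a) ` Sigma N' (\<lambda>r. GE r x)"
  by (simp add: edges_def)

lemma edges_outer: "y \<in> sdom \<theta> \<Longrightarrow> edges y = (\<lambda>a. Suc (2 * a)) ` E' y"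
  using disjoint_domains by (auto simp: edges_def)

lemma nodes_cases:
  assumes "p \<in> nodes"
  obtains r n where "r \<in> N'" "n \<in> GN r" "p = prod_encode (r, n)"
  using assms by (auto simp: nodes_def)

lemma prod_encode_mem_nodes: "r \<in> N' \<Longrightarrow> n \<in> GN r \<Longrightarrow> prod_encode (r, n) \<in> nodes"
  by (simp add: nodes_def)

lemma endpoints_mem_nodes:
  assumes x: "x \<in> sdom \<sigma>1 \<union> sdom \<theta>" and p: "p \<in> edges x"
  shows "src x p \<in> nodes \<and> tgt x p \<in> nodes"
  using x
proof
  assume "x \<in> sdom \<sigma>1"
  with p obtain r e where "r \<in> N'" "e \<in> GE r x" "p = 2 * prod_encode (r, e)"
    by (auto simp: edges_inner)
  then show ?thesis
    using \<open>x \<in> sdom \<sigma>1\<close> sharing_graph_src_mem[OF inner] sharing_graph_tgt_mem[OF inner]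
    by (simp add: prod_encode_mem_nodes)
next
  assume "x \<in> sdom \<theta>"
  with p obtain a where "a \<in> E' x" "p = Suc (2 * a)" by (auto simp: edges_outer)
  then show ?thesis
    using \<open>x \<in> sdom \<theta>\<close> HS_mem HT_mem sharing_graph_src_mem[OF outer] sharing_graph_tgt_mem[OF outer]
    by (force intro: prod_encode_mem_nodes)
qed

lemma card_inner_layer_fibre:
  assumes "x \<in> sdom \<sigma>1" "r \<in> N'"
    and endpoint: "\<And>a. f (2 * prod_encode a) = prod_encode (fst a, F (fst a) (snd a))"
  shows "card {p \<in> edges x. f p = prod_encode (r, n)} = card {e \<in> GE r x. F r e = n}"
proof -
  have "card {p \<in> edges x. f p = prod_encode (r, n)} =
      card {a \<in> Sigma N' (\<lambda>r. GE r x). prod_encode (fst a, F (fst a) (snd a)) = prod_encode (r, n)}"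
    unfolding edges_inner[OF assms(1)] endpoint[symmetric]
    by (rule card_image_Collect) (simp add: inj_on_def prod_encode_eq)
  also have "{a \<in> Sigma N' (\<lambda>r. GE r x). prod_encode (fst a, F (fst a) (snd a)) = prod_encode (r, n)} =
      Pair r ` {e \<in> GE r x. F r e = n}"
    using assms(2) by (auto simp: prod_encode_eq)
  finally show ?thesis by (simp add: card_image inj_on_def)
qed

lemma out_degree_inner:
  assumes "x \<in> sdom \<sigma>1" "r \<in> N'" "n \<in> GN r"
  shows "card {p \<in> edges x. src x p = prod_encode (r, n)} = chi (Gl r n) (Var x :: ('f, 'v) trm)"
  using assms card_inner_layer_fibre[of x r "src x" "\<lambda>r. Gs r x"] sharing_graph_out_degree[OF inner]
  by simp

lemma in_degree_inner:
  assumes "x \<in> sdom \<sigma>1" "r \<in> N'" "n \<in> GN r"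
  shows "card {p \<in> edges x. tgt x p = prod_encode (r, n)} = chi (Gl r n) (\<sigma>1 x)"
  using assms card_inner_layer_fibre[of x r "tgt x" "\<lambda>r. Gt r x"] sharing_graph_in_degree[OF inner]
  by simp

lemma out_degree_outer:
  assumes "y \<in> sdom \<theta>" "r \<in> N'" "n \<in> GN r"
  shows "card {p \<in> edges y. src y p = prod_encode (r, n)} = chi (Gl r n) (Var y :: ('f, 'v) trm)"
  using assms HS_card by (simp add: edges_outer card_image_Collect inj_on_def)

lemma in_degree_outer:
  assumes "y \<in> sdom \<theta>" "r \<in> N'" "n \<in> GN r"
  shows "card {p \<in> edges y. tgt y p = prod_encode (r, n)} = chi (Gl r n) (\<theta> y)"
  using assms HT_card by (simp add: edges_outer card_image_Collect inj_on_def)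

lemma edges_disjoint:
  assumes "x \<in> sdom \<sigma>1 \<union> sdom \<theta>" "y \<in> sdom \<sigma>1 \<union> sdom \<theta>" "x \<noteq> y"
  shows "edges x \<inter> edges y = {}"
proof -
  consider (both_inner) "x \<in> sdom \<sigma>1" "y \<in> sdom \<sigma>1" | (both_outer) "x \<in> sdom \<theta>" "y \<in> sdom \<theta>"
    | (mixed) "x \<in> sdom \<sigma>1 \<and> y \<in> sdom \<theta> \<or> x \<in> sdom \<theta> \<and> y \<in> sdom \<sigma>1"
    using assms(1,2) by blast
  then show ?thesis
  proof cases
    case both_inner
    have "GE r x \<inter> GE r y = {}" if "r \<in> N'" for r
      using sharing_graph_edges_disjoint[OF inner[OF that]] both_inner assms(3) by blast
    then show ?thesis using both_inner by (fastforce simp: edges_inner prod_encode_eq)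
  next
    case both_outer
    then have "E' x \<inter> E' y = {}" using sharing_graph_edges_disjoint[OF outer] assms(3) by blast
    then show ?thesis using both_outer by (auto simp: edges_outer)
  next
    case mixed
    have "even p" if "z \<in> sdom \<sigma>1" "p \<in> edges z" for z p using that by (auto simp: edges_inner)
    moreover have "odd p" if "z \<in> sdom \<theta>" "p \<in> edges z" for z p using that by (auto simp: edges_outer)
    ultimately show ?thesis using mixed by blast
  qed
qed

lemma nodes_connected:
  assumes "p \<in> nodes" "q \<in> nodes"
  shows "(p, q) \<in> (edge_rel (sdom \<sigma>1 \<union> sdom \<theta>) edges src tgt \<union>
    (edge_rel (sdom \<sigma>1 \<union> sdom \<theta>) edges src tgt)\<inverse>)\<^sup>*"
proof -
  let ?R = "edge_rel (sdom \<sigma>1 \<union> sdom \<theta>) edges src tgt"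
  let ?block = "\<lambda>r. (\<lambda>n. prod_encode (r, n)) ` GN r"
  have "\<forall>a\<in>?block r. \<forall>b\<in>?block s. (a, b) \<in> (?R \<union> ?R\<inverse>)\<^sup>*" if "r \<in> N'" "s \<in> N'" for r s
  proof (rule rtrancl_Un_converse_blocks[OF sharing_graph_connected[OF outer that] \<open>r \<in> N'\<close>])
    fix u v assume "(u, v) \<in> edge_rel (sdom \<theta>) E' src' tgt'"
    then obtain y a where ya: "y \<in> sdom \<theta>" "a \<in> E' y" "u = src' y a" "v = tgt' y a"
      by (auto simp: edge_rel_def)
    then show "u \<in> N' \<and> v \<in> N'"
      using outer by (auto intro: sharing_graph_src_mem sharing_graph_tgt_mem)
    have "2 * a + 1 \<in> edges y" using ya by (simp add: edges_outer)
    then have "(HS y a, HT y a) \<in> ?R" using ya(1) by (force simp: edge_rel_def)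
    then show "\<exists>a\<in>?block u. \<exists>b\<in>?block v. (a, b) \<in> ?R"
      using HS_mem[OF ya(1,2)] HT_mem[OF ya(1,2)] ya(3,4) by blast
  next
    fix k a b assume "k \<in> N'" "a \<in> ?block k" "b \<in> ?block k"
    then obtain n m where nm: "n \<in> GN k" "m \<in> GN k" "a = prod_encode (k, n)" "b = prod_encode (k, m)"
      by blast
    have "(prod_encode (k, n), prod_encode (k, m)) \<in> (?R \<union> ?R\<inverse>)\<^sup>*"
    proof (rule rtrancl_Un_converse_map[OF sharing_graph_connected[OF inner[OF \<open>k \<in> N'\<close>] nm(1,2)]])
      fix u v assume "(u, v) \<in> edge_rel (sdom \<sigma>1) (GE k) (Gs k) (Gt k)"
      then obtain x e where xe: "x \<in> sdom \<sigma>1" "e \<in> GE k x" "u = Gs k x e" "v = Gt k x e"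
        by (auto simp: edge_rel_def)
      then have "2 * prod_encode (k, e) \<in> edges x" using \<open>k \<in> N'\<close> by (force simp: edges_inner)
      then have "(prod_encode (k, u), prod_encode (k, v)) \<in> ?R"
        using xe by (force simp: edge_rel_def)
      then show "(prod_encode (k, u), prod_encode (k, v)) \<in> (?R \<union> ?R\<inverse>)\<^sup>*" by blast
    qed
    then show "(a, b) \<in> (?R \<union> ?R\<inverse>)\<^sup>*" using nm by simp
  qed
  moreover obtain r n s m where "r \<in> N'" "n \<in> GN r" "p = prod_encode (r, n)"
    "s \<in> N'" "m \<in> GN s" "q = prod_encode (s, m)"
    using assms by (auto elim!: nodes_cases)
  ultimately show ?thesis by blast
qed

theorem expansion_sharing_graph: "sharing_graph S (subst_union \<sigma>1 \<theta>) nodes edges src tgt lab"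
proof (rule sharing_graphI, unfold sdom_subst_union)
  show "finite nodes"
    using outer inner by (auto simp: nodes_def dest: sharing_graph_finite_nodes)
  show "nodes \<noteq> {}"
    using outer inner by (auto simp: nodes_def dest!: sharing_graph_nodes_nonempty)
next
  fix p assume "p \<in> nodes"
  then obtain r n where "r \<in> N'" "n \<in> GN r" "p = prod_encode (r, n)" by (rule nodes_cases)
  then show "lab p \<in> S" using sharing_graph_labels[OF inner] by simp
next
  fix x assume "x \<in> sdom \<sigma>1 \<union> sdom \<theta>"
  then show "finite (edges x)"
  proof
    assume "x \<in> sdom \<sigma>1"
    then show ?thesis
      using sharing_graph_finite_nodes[OF outer] sharing_graph_edges_finite[OF inner]
      by (simp add: edges_inner)
  next
    assume "x \<in> sdom \<theta>"
    then show ?thesis using sharing_graph_edges_finite[OF outer] by (simp add: edges_outer)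
  qed
next
  fix x p assume "x \<in> sdom \<sigma>1 \<union> sdom \<theta>" "p \<in> edges x"
  then show "src x p \<in> nodes" and "tgt x p \<in> nodes" by (simp_all add: endpoints_mem_nodes)
next
  fix p x assume "p \<in> nodes" "x \<in> sdom \<sigma>1 \<union> sdom \<theta>"
  then show "card {e \<in> edges x. src x e = p} = chi (lab p) (Var x :: ('f, 'v) trm)"
    and "card {e \<in> edges x. tgt x e = p} = chi (lab p) (subst_union \<sigma>1 \<theta> x)"
    using disjoint_domains
    by (auto elim!: nodes_cases simp: subst_union_def out_degree_inner in_degree_inner
        out_degree_outer in_degree_outer)
qed (use edges_disjoint nodes_connected in auto)

lemma sum_lab_nodes: "(\<Sum>p\<in>nodes. lab p) = (\<Sum>r\<in>N'. lab' r)"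
proof -
  have "(\<Sum>p\<in>nodes. lab p) = (\<Sum>(r, n)\<in>Sigma N' GN. Gl r n)"
    unfolding nodes_def by (simp add: sum.reindex inj_on_def prod_encode_eq lab_def)
  also have "\<dots> = (\<Sum>r\<in>N'. \<Sum>n\<in>GN r. Gl r n)"
    using outer inner by (auto intro: sum.Sigma[symmetric] dest: sharing_graph_finite_nodes)
  finally show ?thesis using inner_sum by simp
qed

end

lemma mgu_p_choice:
  fixes \<sigma> :: "'v \<Rightarrow> ('f, 'v) trm"
  assumes "\<And>r. r \<in> R \<Longrightarrow> L r \<in> mgu_p S \<sigma>"
  obtains GN :: "'i \<Rightarrow> nat set" and GE :: "'i \<Rightarrow> 'v \<Rightarrow> nat set"
    and Gs Gt :: "'i \<Rightarrow> 'v \<Rightarrow> nat \<Rightarrow> nat" and Gl :: "'i \<Rightarrow> nat \<Rightarrow> 'v multiset"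
  where "\<forall>r\<in>R. sharing_graph S \<sigma> (GN r) (GE r) (Gs r) (Gt r) (Gl r) \<and> L r = (\<Sum>n\<in>GN r. Gl r n)"
proof -
  have "\<forall>r\<in>R. \<exists>G. case G of (N, E, s, t, l) \<Rightarrow> sharing_graph S \<sigma> N E s t l \<and> L r = (\<Sum>n\<in>N. l n)"
  proof
    fix r assume "r \<in> R"
    then obtain N E s t l where "L r = (\<Sum>n\<in>N. l n)" "sharing_graph S \<sigma> N E s t l"
      using assms unfolding mem_mgu_p_iff by blast
    then show "\<exists>G. case G of (N, E, s, t, l) \<Rightarrow> sharing_graph S \<sigma> N E s t l \<and> L r = (\<Sum>n\<in>N. l n)"
      by (intro exI[of _ "(N, E, s, t, l)"]) simp
  qed
  then obtain G where "\<forall>r\<in>R. case G r of (N, E, s, t, l) \<Rightarrow> sharing_graph S \<sigma> N E s t l \<and> L r = (\<Sum>n\<in>N. l n)"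
    by (rule bchoice[THEN exE])
  then show ?thesis
    by (intro that[of "\<lambda>r. fst (G r)" "\<lambda>r. fst (snd (G r))" "\<lambda>r. fst (snd (snd (G r)))"
          "\<lambda>r. fst (snd (snd (snd (G r))))" "\<lambda>r. snd (snd (snd (snd (G r))))"])
      (simp_all add: split_beta)
qed

lemma exists_reattachment:
  assumes "finite A" "g ` A \<subseteq> R"
    and "\<And>r. r \<in> R \<Longrightarrow> finite (GN r)"
    and "\<And>r. r \<in> R \<Longrightarrow> card {a\<in>A. g a = r} = chi (\<Sum>n\<in>GN r. Gl r n) t"
  shows "\<exists>h. (\<forall>a\<in>A. h a \<in> (\<lambda>n. prod_encode (g a, n)) ` GN (g a)) \<and>
    (\<forall>r\<in>R. \<forall>n\<in>GN r. card {a\<in>A. h a = prod_encode (r, n)} = chi (Gl r n) t)"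
proof -
  let ?block = "\<lambda>r. (\<lambda>n. prod_encode (r, n)) ` GN r"
  let ?w = "\<lambda>p. chi (case_prod Gl (prod_decode p)) t"
  have "(\<Sum>b\<in>?block r. ?w b) = chi (\<Sum>n\<in>GN r. Gl r n) t" for r
    by (simp add: sum.reindex inj_on_def prod_encode_eq chi_sum)
  then obtain h where h: "\<forall>a\<in>A. h a \<in> ?block (g a)"
    "\<forall>r\<in>R. \<forall>b\<in>?block r. card {a\<in>A. g a = r \<and> h a = b} = ?w b"
    using exists_map_into_blocks_with_fibre_cards[of A g R ?block ?w] assms by auto
  have fibre: "{a\<in>A. h a = prod_encode (r, n)} = {a\<in>A. g a = r \<and> h a = prod_encode (r, n)}" for r n
    using h(1) by (auto simp: prod_encode_eq)
  show ?thesis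
  proof (intro exI[of _ h] conjI ballI)
    fix r n assume "r \<in> R" "n \<in> GN r"
    then show "card {a\<in>A. h a = prod_encode (r, n)} = chi (Gl r n) t"
      unfolding fibre using h(2) by simp
  qed (use h(1) in blast)
qed

lemma sharing_graph_expand:
  fixes \<sigma>1 \<theta> :: "'v \<Rightarrow> ('f, 'v) trm"
  assumes disjoint: "sdom \<sigma>1 \<inter> sdom \<theta> = {}"
    and G: "sharing_graph (mgu_p S \<sigma>1) \<theta> N' E' src' tgt' lab'"
  shows "(\<Sum>r\<in>N'. lab' r) \<in> mgu_p S (subst_union \<sigma>1 \<theta>)"
proof -
  obtain GN :: "nat \<Rightarrow> nat set" and GE :: "nat \<Rightarrow> 'v \<Rightarrow> nat set"
    and Gs Gt :: "nat \<Rightarrow> 'v \<Rightarrow> nat \<Rightarrow> nat" and Gl :: "nat \<Rightarrow> nat \<Rightarrow> 'v multiset"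
    where inner_graphs: "\<forall>r\<in>N'. sharing_graph S \<sigma>1 (GN r) (GE r) (Gs r) (Gt r) (Gl r) \<and>
      lab' r = (\<Sum>n\<in>GN r. Gl r n)"
    by (rule mgu_p_choice[OF sharing_graph_labels[OF G]])
  then have inner: "\<And>r. r \<in> N' \<Longrightarrow> sharing_graph S \<sigma>1 (GN r) (GE r) (Gs r) (Gt r) (Gl r)"
    and inner_sum: "\<And>r. r \<in> N' \<Longrightarrow> lab' r = (\<Sum>n\<in>GN r. Gl r n)"
    by auto
  have "\<forall>y\<in>sdom \<theta>. \<exists>h. (\<forall>a\<in>E' y. h a \<in> (\<lambda>n. prod_encode (src' y a, n)) ` GN (src' y a)) \<and>
      (\<forall>r\<in>N'. \<forall>n\<in>GN r. card {a\<in>E' y. h a = prod_encode (r, n)} = chi (Gl r n) (Var y :: ('f, 'v) trm))"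
    using G inner inner_sum
    by (intro ballI exists_reattachment) (auto dest: sharing_graph_edges_finite sharing_graph_src_mem
        sharing_graph_out_degree sharing_graph_finite_nodes)
  then obtain HS where HS: "\<forall>y\<in>sdom \<theta>. (\<forall>a\<in>E' y. HS y a \<in> (\<lambda>n. prod_encode (src' y a, n)) ` GN (src' y a)) \<and>
      (\<forall>r\<in>N'. \<forall>n\<in>GN r. card {a\<in>E' y. HS y a = prod_encode (r, n)} = chi (Gl r n) (Var y :: ('f, 'v) trm))"
    by (rule bchoice[THEN exE])
  have "\<forall>y\<in>sdom \<theta>. \<exists>h. (\<forall>a\<in>E' y. h a \<in> (\<lambda>n. prod_encode (tgt' y a, n)) ` GN (tgt' y a)) \<and>
      (\<forall>r\<in>N'. \<forall>n\<in>GN r. card {a\<in>E' y. h a = prod_encode (r, n)} = chi (Gl r n) (\<theta> y))"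
    using G inner inner_sum
    by (intro ballI exists_reattachment) (auto dest: sharing_graph_edges_finite sharing_graph_tgt_mem
        sharing_graph_in_degree sharing_graph_finite_nodes)
  then obtain HT where HT: "\<forall>y\<in>sdom \<theta>. (\<forall>a\<in>E' y. HT y a \<in> (\<lambda>n. prod_encode (tgt' y a, n)) ` GN (tgt' y a)) \<and>
      (\<forall>r\<in>N'. \<forall>n\<in>GN r. card {a\<in>E' y. HT y a = prod_encode (r, n)} = chi (Gl r n) (\<theta> y))"
    by (rule bchoice[THEN exE])
  interpret sharing_graph_expansion S \<sigma>1 \<theta> N' E' src' tgt' lab' GN GE Gs Gt Gl HS HT
    using disjoint G inner inner_sum HS HT by unfold_locales auto
  show ?thesis
    unfolding mem_mgu_p_iff sum_lab_nodes[symmetric] using expansion_sharing_graph by blast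
qed

theorem mgu_p_subst_union:
  fixes \<sigma>1 \<theta> :: "'v \<Rightarrow> ('f, 'v) trm"
  assumes "sdom \<sigma>1 \<inter> sdom \<theta> = {}"
  shows "mgu_p S (subst_union \<sigma>1 \<theta>) = mgu_p (mgu_p S \<sigma>1) \<theta>"
proof (intro set_eqI iffI)
  have dom: "\<And>x. x \<in> sdom \<sigma>1 \<Longrightarrow> \<sigma>1 x = subst_union \<sigma>1 \<theta> x"
    "\<And>y. y \<in> sdom \<theta> \<Longrightarrow> \<theta> y = subst_union \<sigma>1 \<theta> y"
    using assms by (auto simp: subst_union_def)
  fix M assume "M \<in> mgu_p S (subst_union \<sigma>1 \<theta>)"
  then obtain N E src tgt lab
    where "M = (\<Sum>n\<in>N. lab n)" "sharing_graph S (subst_union \<sigma>1 \<theta>) N E src tgt lab"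
    unfolding mem_mgu_p_iff by blast
  then show "M \<in> mgu_p (mgu_p S \<sigma>1) \<theta>"
    using sharing_graph_collapse[OF _ sdom_subst_union dom] by simp
next
  fix M assume "M \<in> mgu_p (mgu_p S \<sigma>1) \<theta>"
  then obtain N E src tgt lab
    where "M = (\<Sum>n\<in>N. lab n)" "sharing_graph (mgu_p S \<sigma>1) \<theta> N E src tgt lab"
    unfolding mem_mgu_p_iff by blast
  then show "M \<in> mgu_p S (subst_union \<sigma>1 \<theta>)"
    using sharing_graph_expand[OF assms] by blast
qed

theorem lemma1:
  fixes S :: "'v multiset set"
    and \<theta> :: "'v \<Rightarrow> ('f, 'v) trm"
    and x1 :: 'v and t1 :: "('f, 'v) trm"
  assumes "idempotent \<theta>"
    and "x1 \<notin> sdom \<theta>"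
    and "t1 \<noteq> Var x1"
    and "idempotent (\<theta>(x1 := t1))"
  shows "mgu_p S (\<theta>(x1 := t1)) = mgu_p (mgu_p S (Var(x1 := t1))) \<theta>"
proof -
  have "sdom (Var(x1 := t1) :: 'v \<Rightarrow> ('f, 'v) trm) = {x1}"
    using assms(3) by (auto simp: sdom_def)
  then have "\<theta>(x1 := t1) = subst_union (Var(x1 := t1)) \<theta>"
    and "sdom (Var(x1 := t1) :: 'v \<Rightarrow> ('f, 'v) trm) \<inter> sdom \<theta> = {}"
    using assms(2) by (auto simp: subst_union_def)
  then show ?thesis by (simp add: mgu_p_subst_union)
qed

end
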